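(* Let $\lambda>0$, $\lambda_{max}>0$, $p\in(0,1)$. Suppose $P_b\in[0,1)$ satisfies $$P_b=1-\exp\!\Big(-\frac{\lambda(1-P_b)\,r}{\lambda_{max}}\Big),\qquad r=\min\Big\{\frac{p}{1-P_b},1\Big\}.$$ If $\frac{-\lambda_{max}\ln p}{\lambda}>p$, then $P_b=1-\exp\!\big(-\frac{p\lambda}{\lambda_{max}}\big)$. Otherwise, $P_b$ satisfies $P_b=1-\exp\!\big(-\frac{\lambda(1-P_b)}{\lambda_{max}}\big)$.
   Context: CSMA model: packets arrive as a Poisson process and are assigned to transmitters uniformly located in a large area, yielding (in the limit) transmitter density $\lambda$ in $\mathbb{R}^2$; each receiver is at distance $d$ from its transmitter, path-loss exponent $\alpha>2$, Rayleigh fading, SIR threshold $\theta$, and $\lambda_{max}=\frac{1}{d^2\theta^{2/\alpha}\kappa(\alpha)}$ with $\kappa(\alpha)=\frac{2\pi^2}{\alpha\sin(2\pi/\alpha)}$. A transmitter sends (with unit power) if its sensed SIR exceeds $\theta$ and its battery (infinite capacity, one energy unit arriving per slot with probability $p$, i.i.d.) is nonempty; otherwise it backs off. $P_b$ is the back-off probability and $r$ the stationary probability of a nonempty battery. Under the modeling approximation that back-off events of different transmitters are independent, so that active transmitters form a Poisson point process of density $\lambda(1-P_b)r$, the back-off probability is a number $P_b\in[0,1)$ satisfying the displayed fixed-point equation. *)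

theory Defs
  imports Complex_Main
begin

end

theory Submission
  imports Defs
begin

text \<open>Write \<open>q = 1 - P\<^sub>b\<close> and \<open>c = \<lambda>/\<lambda>\<^sub>m\<^sub>a\<^sub>x\<close>. Since \<open>(1 - P\<^sub>b) r = min p q\<close>, the fixed-point
  equation becomes \<open>q = exp (-c min p q)\<close>. Its solution has \<open>q \<ge> p\<close> exactly when \<open>p\<close> lies below
  \<open>exp (-c p)\<close>, and the hypothesis \<open>-\<lambda>\<^sub>m\<^sub>a\<^sub>x ln p / \<lambda> > p\<close> is just \<open>p < exp (-c p)\<close> after taking logarithms.\<close>

lemma fixed_point_min_eq_left:
  fixes c p q :: real
  assumes "c \<ge> 0" and "q = exp (- (c * min p q))" and "p < exp (- (c * p))"
  shows "min p q = p"
proof (rule ccontr)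
  assume "min p q \<noteq> p"
  then have "q < p" by (simp add: min_def split: if_splits)
  then have "exp (- (c * p)) \<le> exp (- (c * q))"
    using assms(1) by (simp add: mult_left_mono)
  also have "\<dots> = q" using assms(2) \<open>q < p\<close> by simp
  finally show False using assms(3) \<open>q < p\<close> by linarith
qed

lemma fixed_point_min_eq_right:
  fixes c p q :: real
  assumes "q = exp (- (c * min p q))" and "exp (- (c * p)) \<le> p"
  shows "min p q = q"
proof (rule ccontr)
  assume "min p q \<noteq> q"
  then have "p < q" by (simp add: min_def split: if_splits)
  then have "q = exp (- (c * p))" using assms(1) by simp
  then show False using assms(2) \<open>p < q\<close> by linarith
qed

lemma less_exp_iff_ln_less:
  fixes a p :: real
  assumes "p > 0"
  shows "p < exp a \<longleftrightarrow> ln p < a"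
  using assms by (metis exp_less_cancel_iff exp_ln)

theorem theorem5:
  fixes lam lmax p Pb r :: real
  assumes "lam > 0" and "lmax > 0" and "0 < p" and "p < 1"
    and "0 \<le> Pb" and "Pb < 1"
    and "r = min (p / (1 - Pb)) 1"
    and "Pb = 1 - exp (- (lam * (1 - Pb) * r / lmax))"
  shows "(- lmax * ln p / lam > p \<longrightarrow> Pb = 1 - exp (- (p * lam / lmax)))
       \<and> (\<not> (- lmax * ln p / lam > p) \<longrightarrow> Pb = 1 - exp (- (lam * (1 - Pb) / lmax)))"
proof -
  define q c where "q = 1 - Pb" and "c = lam / lmax"
  have "c > 0" using assms(1,2) by (simp add: c_def)
  have "(1 - Pb) * r = min p q"
    using assms(6,7) by (auto simp: q_def min_def field_simps)
  then have fixed_point: "q = exp (- (c * min p q))"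
    using assms(8) by (simp add: q_def c_def mult.assoc)
  have threshold: "- lmax * ln p / lam > p \<longleftrightarrow> p < exp (- (c * p))"
    using assms(1-3)
    by (simp add: less_exp_iff_ln_less c_def field_simps) linarith
  show ?thesis
  proof (intro conjI impI)
    assume "- lmax * ln p / lam > p"
    then have "min p q = p"
      using fixed_point_min_eq_left[OF _ fixed_point] \<open>c > 0\<close> threshold by simp
    then show "Pb = 1 - exp (- (p * lam / lmax))"
      using fixed_point by (simp add: q_def c_def mult.commute)
  next
    assume "\<not> - lmax * ln p / lam > p"
    then have "min p q = q"
      using fixed_point_min_eq_right[OF fixed_point] threshold by simp
    then show "Pb = 1 - exp (- (lam * (1 - Pb) / lmax))"
      using fixed_point by (simp add: q_def c_def)
  qed
qed

end
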